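(* Let $\mathcal A=\mathbb C[z^{-1},z]]$ and let $\phi\colon H_R\to\mathcal A$ be a character. The following are equivalent: (1) For every $w\in H_R$, $\sum_w\phi(S(w_1))\,|w_2|\,\phi(w_2)\in z^{-1}\mathbb C[[z]]$, i.e. $\phi\circ(S\star Y)$ maps into $z^{-1}\mathbb C[[z]]$. (2) For every $n\ge0$ and $w\in H_R$, $\sum_w\phi(S(w_1))\,|w_2|^n\,\phi(w_2)\in z^{-n}\mathbb C[[z]]$. (3) For every $s\in\mathbb C$ and $w\in H_R$, $\sum_w\phi(S(w_1))\,e^{sz|w_2|}\,\phi(w_2)\in\mathbb C[[z]]$, i.e. $\phi^{\star-1}\star(\phi\circ\theta_{sz})$ maps into $\mathbb C[[z]]$.
   Context: $\mathbb C[z^{-1},z]]$ denotes formal Laurent series in $z$ with finitely many negative powers, $\mathbb C[[z]]$ formal power series. $H_R$ is the Connes–Kreimer Hopf algebra of rooted trees over $\mathbb C$ (basis rooted forests, $|w|$ number of nodes, coproduct $\Delta w=\sum_ww_1\otimes w_2$ determined by $\Delta\circ B_+=B_+\otimes\mathbb 1+(\mathrm{id}\otimes B_+)\circ\Delta$ with $B_+$ grafting onto a new root, antipode $S$). Sums over homogeneous components are understood by linearity. $Y$ is the grading operator $Yw=|w|w$; $\phi\circ\theta_{sz}$ is the character $w\mapsto e^{sz|w|}\phi(w)$ (with $e^{sz|w|}$ expanded as a power series in $z$). A character is a unital algebra morphism; $\phi^{\star-1}=\phi\circ S$. *)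

theory Defs
  imports Complex_Main "HOL-Library.Multiset" "HOL-Library.Poly_Mapping"
    "HOL-Library.Product_Plus" "HOL-Computational_Algebra.Formal_Laurent_Series"
begin

text \<open>Non-planar rooted trees: a tree is a root with a multiset of subtrees (the forest of
  its children). A rooted forest is a multiset of trees; the empty forest is the unit.\<close>

datatype tree = Node "tree multiset"

type_synonym forest = "tree multiset"

definition Bplus :: "forest \<Rightarrow> tree" where
  "Bplus f = Node f"

primrec nodes :: "tree \<Rightarrow> nat" where
  "nodes (Node ts) = Suc (sum_mset (image_mset nodes ts))"

text \<open>Number of nodes of a forest, written |w|.\<close>
definition fsize :: "forest \<Rightarrow> nat" where
  "fsize f = sum_mset (image_mset nodes f)"

text \<open>H_R is the free commutative complex algebra on rooted trees, i.e. the complex vector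
  space with basis the rooted forests, multiplication being disjoint union of forests.
  H_R tensor H_R has basis the pairs of forests.\<close>

type_synonym HR = "forest \<Rightarrow>\<^sub>0 complex"
type_synonym HR2 = "(forest \<times> forest) \<Rightarrow>\<^sub>0 complex"

definition id_tensor_Bplus :: "HR2 \<Rightarrow> HR2" where
  "id_tensor_Bplus X =
     (\<Sum>k\<in>Poly_Mapping.keys X. Poly_Mapping.single (fst k, {#Bplus (snd k)#}) (Poly_Mapping.lookup X k))"

text \<open>Coproduct on trees, via Delta(B_+ f) = B_+ f tensor 1 + (id tensor B_+)(Delta f),
  with Delta multiplicative on forests.\<close>
primrec cop_tree :: "tree \<Rightarrow> HR2" where
  "cop_tree (Node ts) = Poly_Mapping.single ({#Node ts#}, {#}) 1
      + id_tensor_Bplus (prod_mset (image_mset cop_tree ts))"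

definition cop :: "forest \<Rightarrow> HR2" where
  "cop f = prod_mset (image_mset cop_tree f)"

definition coproduct :: "HR \<Rightarrow> HR2" where
  "coproduct w = (\<Sum>f\<in>Poly_Mapping.keys w. Poly_Mapping.single ({#}, {#}) (Poly_Mapping.lookup w f) * cop f)"

lemma keys_id_tensor_Bplus:
  "Poly_Mapping.keys (id_tensor_Bplus X) \<subseteq> (\<lambda>k. (fst k, {#Bplus (snd k)#})) ` Poly_Mapping.keys X"
proof
  fix x assume "x \<in> Poly_Mapping.keys (id_tensor_Bplus X)"
  then have "x \<in> (\<Union>k\<in>Poly_Mapping.keys X. Poly_Mapping.keys (Poly_Mapping.single (fst k, {#Bplus (snd k)#}) (Poly_Mapping.lookup X k)))"
    unfolding id_tensor_Bplus_def by (rule subsetD[OF keys_sum])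
  then show "x \<in> (\<lambda>k. (fst k, {#Bplus (snd k)#})) ` Poly_Mapping.keys X"
    by (auto split: if_splits)
qed

lemma fsize_add [simp]: "fsize (f + g) = fsize f + fsize g"
  by (simp add: fsize_def)

lemma fsize_empty [simp]: "fsize {#} = 0"
  by (simp add: fsize_def)

lemma keys_prod_mset_cop:
  assumes "\<And>t. t \<in># ts \<Longrightarrow> \<forall>k\<in>Poly_Mapping.keys (cop_tree t). fsize (fst k) + fsize (snd k) = nodes t"
  shows "\<forall>k\<in>Poly_Mapping.keys (prod_mset (image_mset cop_tree ts)). fsize (fst k) + fsize (snd k) = fsize ts"
  using assms
proof (induction ts)
  case empty
  then show ?case by simp
next
  case (add t ts)
  have IH: "\<forall>k\<in>Poly_Mapping.keys (prod_mset (image_mset cop_tree ts)). fsize (fst k) + fsize (snd k) = fsize ts"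
    using add.IH add.prems by simp
  have Ht: "\<forall>k\<in>Poly_Mapping.keys (cop_tree t). fsize (fst k) + fsize (snd k) = nodes t"
    using add.prems by simp
  have fs: "fsize (add_mset t ts) = nodes t + fsize ts"
    by (simp add: fsize_def)
  show ?case
  proof
    fix k assume k: "k \<in> Poly_Mapping.keys (prod_mset (image_mset cop_tree (add_mset t ts)))"
    have "prod_mset (image_mset cop_tree (add_mset t ts)) = cop_tree t * prod_mset (image_mset cop_tree ts)"
      by simp
    with k have "k \<in> Poly_Mapping.keys (cop_tree t * prod_mset (image_mset cop_tree ts))"
      by simp
    then have "k \<in> {a + b |a b. a \<in> Poly_Mapping.keys (cop_tree t) \<and> b \<in> Poly_Mapping.keys (prod_mset (image_mset cop_tree ts))}"
      by (rule subsetD[OF keys_mult])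
    then obtain a b where ab: "k = a + b" "a \<in> Poly_Mapping.keys (cop_tree t)"
      "b \<in> Poly_Mapping.keys (prod_mset (image_mset cop_tree ts))" by blast
    have "fst k = fst a + fst b" "snd k = snd a + snd b"
      using ab(1) by (simp_all add: plus_prod_def split: prod.splits)
    moreover have "fsize (fst a) + fsize (snd a) = nodes t" using Ht ab(2) by blast
    moreover have "fsize (fst b) + fsize (snd b) = fsize ts" using IH ab(3) by blast
    ultimately show "fsize (fst k) + fsize (snd k) = fsize (add_mset t ts)"
      using fs by simp
  qed
qed

lemma keys_cop_tree_size:
  "\<forall>k\<in>Poly_Mapping.keys (cop_tree t). fsize (fst k) + fsize (snd k) = nodes t"
proof (induction t)
  case (Node ts)
  have IH: "\<forall>k\<in>Poly_Mapping.keys (prod_mset (image_mset cop_tree ts)). fsize (fst k) + fsize (snd k) = fsize ts"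
    by (rule keys_prod_mset_cop) (use Node in auto)
  show ?case
  proof
    fix k assume "k \<in> Poly_Mapping.keys (cop_tree (Node ts))"
    then have "k = ({#Node ts#}, {#}) \<or> k \<in> (\<lambda>k. (fst k, {#Bplus (snd k)#})) ` Poly_Mapping.keys (prod_mset (image_mset cop_tree ts))"
      using keys_add[of "Poly_Mapping.single ({#Node ts#}, {#}) (1::complex)"] keys_id_tensor_Bplus
      by (auto split: if_splits)
    then show "fsize (fst k) + fsize (snd k) = nodes (Node ts)"
      using IH by (auto simp: fsize_def Bplus_def)
  qed
qed

lemma keys_cop_size:
  "k \<in> Poly_Mapping.keys (cop f) \<Longrightarrow> fsize (fst k) + fsize (snd k) = fsize f"
  using keys_prod_mset_cop[of f] keys_cop_tree_size unfolding cop_def by blast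

lemma fsize_pos: "f \<noteq> {#} \<Longrightarrow> 0 < fsize f"
proof (cases f)
  case (add t g)
  have "0 < nodes t" by (cases t) simp
  then show ?thesis using add by (simp add: fsize_def)
qed simp

text \<open>The antipode on basis forests, determined by m(S tensor id)Delta = eta epsilon:
  S(1) = 1 and, for a nonempty forest w, S(w) = - sum over the terms w_1 tensor w_2 of
  Delta w with w_2 not equal to 1 of S(w_1) w_2 (the only term of Delta w with w_2 = 1 being
  w tensor 1).\<close>
function antipode :: "forest \<Rightarrow> HR" where
  "antipode f = (if f = {#} then 1 else
     - (\<Sum>k\<in>{k\<in>Poly_Mapping.keys (cop f). snd k \<noteq> {#}}.
          Poly_Mapping.single {#} (Poly_Mapping.lookup (cop f) k) * antipode (fst k)
          * Poly_Mapping.single (snd k) 1))"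
  by pat_completeness auto
termination
proof (relation "measure fsize")
  fix f k
  assume "\<not> f = {#}" "k \<in> {k\<in>Poly_Mapping.keys (cop f). snd k \<noteq> {#}}"
  then show "(fst k, f) \<in> measure fsize"
    using keys_cop_size[of k f] fsize_pos[of "snd k"] by auto
qed auto

declare antipode.simps [simp del]

definition character :: "(HR \<Rightarrow> complex fls) \<Rightarrow> bool" where
  "character \<phi> \<longleftrightarrow>
     (\<forall>x y. \<phi> (x + y) = \<phi> x + \<phi> y) \<and>
     (\<forall>x y. \<phi> (x * y) = \<phi> x * \<phi> y) \<and>
     (\<forall>c. \<phi> (Poly_Mapping.single {#} c) = fls_const c)"

definition forest_elem :: "forest \<Rightarrow> HR" where
  "forest_elem f = Poly_Mapping.single f 1"

definition sweedler_sum :: "HR2 \<Rightarrow> (forest \<Rightarrow> forest \<Rightarrow> complex fls) \<Rightarrow> complex fls" where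
  "sweedler_sum X F = (\<Sum>k\<in>Poly_Mapping.keys X. fls_const (Poly_Mapping.lookup X k) * F (fst k) (snd k))"

definition in_zpow_fps :: "int \<Rightarrow> complex fls \<Rightarrow> bool" where
  "in_zpow_fps m f \<longleftrightarrow> (\<forall>k<m. fls_nth f k = 0)"

end

theory Submission
  imports Defs
begin

text \<open>
  For a character \<phi> let Phi = \<phi> and Psi = \<phi> \<circ> S on basis forests, and let
  beta n = Psi \<star> (Y^n Phi), where \<star> is the convolution product defined by the coproduct.
  Statement (2) says that beta n has a pole of order at most n, statement (1) is its case
  n = 1, and statement (3) is the exponential generating function of the family (2).

  Since
  the antipode is defined as a left inverse, Psi is the two-sided inverse of Phi.  The
  grading Y is a derivation for \<star>; together with Phi \<star> Psi = \<epsilon> this gives the recursion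
  beta (n + 1) = Y (beta n) + beta 1 \<star> beta n, from which (1) \<Longrightarrow> (2) follows by induction.
  The equivalence (2) \<longleftrightarrow> (3) is coefficient extraction: the coefficient of z^j in (3) is a
  polynomial in s whose i-th coefficient is the coefficient of z^(j - i) in (2) divided by i!.
\<close>

definition pm_sum :: "('a \<Rightarrow>\<^sub>0 complex) \<Rightarrow> ('a \<Rightarrow> complex fls) \<Rightarrow> complex fls" where
  "pm_sum X F = (\<Sum>k\<in>Poly_Mapping.keys X. fls_const (Poly_Mapping.lookup X k) * F k)"

lemma sweedler_sum_pm_sum: "sweedler_sum X F = pm_sum X (\<lambda>k. F (fst k) (snd k))"
  by (simp add: sweedler_sum_def pm_sum_def)

lemma pm_sum_add: "pm_sum (X + Y) F = pm_sum X F + pm_sum Y F"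
  unfolding pm_sum_def
  by (rule setsum_keys_plus_distrib) (simp_all add: fls_plus_const[symmetric] distrib_right)

lemma pm_sum_zero [simp]: "pm_sum 0 F = 0"
  by (simp add: pm_sum_def)

lemma pm_sum_sum: "pm_sum (\<Sum>i\<in>I. X i) F = (\<Sum>i\<in>I. pm_sum (X i) F)"
  by (induction I rule: infinite_finite_induct) (auto simp: pm_sum_add)

lemma pm_sum_single [simp]: "pm_sum (Poly_Mapping.single k c) F = fls_const c * F k"
  by (simp add: pm_sum_def)

lemma pm_sum_cong: "(\<And>k. k \<in> Poly_Mapping.keys X \<Longrightarrow> F k = G k) \<Longrightarrow> pm_sum X F = pm_sum X G"
  by (simp add: pm_sum_def)

lemma pm_sum_fadd: "pm_sum X (\<lambda>k. F k + G k) = pm_sum X F + pm_sum X G"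
  by (simp add: pm_sum_def distrib_left sum.distrib)

lemma pm_sum_fzero [simp]: "pm_sum X (\<lambda>k. 0) = 0"
  by (simp add: pm_sum_def)

lemma pm_sum_fneg: "pm_sum X (\<lambda>k. - F k) = - pm_sum X F"
  by (simp add: pm_sum_def sum_negf)

lemma pm_sum_cmult_left: "c * pm_sum X F = pm_sum X (\<lambda>k. c * F k)"
  unfolding pm_sum_def by (simp add: sum_distrib_left mult.left_commute)

lemma pm_sum_cmult_right: "pm_sum X F * c = pm_sum X (\<lambda>k. F k * c)"
  using pm_sum_cmult_left[of c X F] by (simp add: mult.commute)

lemma pm_sum_swap: "pm_sum X (\<lambda>a. pm_sum Y (\<lambda>b. F a b)) = pm_sum Y (\<lambda>b. pm_sum X (\<lambda>a. F a b))"
  unfolding pm_sum_def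
  by (simp add: sum_distrib_left mult_ac sum.swap[of _ "Poly_Mapping.keys X"])

lemma poly_mapping_monomial_expansion:
  "X = (\<Sum>k\<in>Poly_Mapping.keys X. Poly_Mapping.single k (Poly_Mapping.lookup X k))"
  by (rule poly_mapping_eqI)
     (auto simp: lookup_sum lookup_single when_def in_keys_iff
       intro!: sum.neutral[symmetric] split: if_splits cong: sum.cong)

lemma pm_sum_mult:
  fixes X Y :: "'a::monoid_add \<Rightarrow>\<^sub>0 complex"
  shows "pm_sum (X * Y) F = pm_sum X (\<lambda>a. pm_sum Y (\<lambda>b. F (a + b)))"
proof -
  have "X * Y = (\<Sum>a\<in>Poly_Mapping.keys X. \<Sum>b\<in>Poly_Mapping.keys Y.
      Poly_Mapping.single (a + b) (Poly_Mapping.lookup X a * Poly_Mapping.lookup Y b))"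
    by (subst (1 2) poly_mapping_monomial_expansion) (simp add: sum_product mult_single)
  then have "pm_sum (X * Y) F = (\<Sum>a\<in>Poly_Mapping.keys X. \<Sum>b\<in>Poly_Mapping.keys Y.
      fls_const (Poly_Mapping.lookup X a) * (fls_const (Poly_Mapping.lookup Y b) * F (a + b)))"
    by (simp add: pm_sum_sum mult_ac)
  then show ?thesis by (simp add: pm_sum_def sum_distrib_left)
qed

lemma pm_sum_one [simp]: "pm_sum (1 :: 'a::monoid_add \<Rightarrow>\<^sub>0 complex) F = F 0"
  by (metis pm_sum_single fls_const_1 mult_1 single_one)

section \<open>The coproduct on forests is a counital coassociative coalgebra\<close>

lemma cop_empty [simp]: "cop {#} = 1"
  by (simp add: cop_def)

lemma cop_plus: "cop (f + g) = cop f * cop g"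
  by (simp add: cop_def)

lemma pm_sum_cop_tree:
  "pm_sum (cop {#Node ts#}) F
   = F ({#Node ts#}, {#}) + pm_sum (cop ts) (\<lambda>k. F (fst k, {#Node (snd k)#}))"
proof -
  have "pm_sum (id_tensor_Bplus X) G = pm_sum X (\<lambda>k. G (fst k, {#Bplus (snd k)#}))" for X G
    unfolding id_tensor_Bplus_def pm_sum_sum by (simp add: pm_sum_def[of X])
  then show ?thesis by (simp add: cop_def pm_sum_add Bplus_def)
qed

text \<open>The
  coalgebra identities below are proved along this induction principle: for a union by
  multiplicativity of the coproduct (pm_sum_mult), for a grafted tree by the recursion
  pm_sum_cop_tree.\<close>
lemma forest_induct [case_names empty union graft]:
  assumes empty: "P {#}" and union: "\<And>f g. P f \<Longrightarrow> P g \<Longrightarrow> P (f + g)"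
    and graft: "\<And>ts. P ts \<Longrightarrow> P {#Node ts#}"
  shows "P f"
proof -
  have from_trees: "P ts" if "\<And>t. t \<in># ts \<Longrightarrow> P {#t#}" for ts
    using that
  proof (induction ts)
    case (add t ts)
    have "P {#t#}" "P ts" using add by simp_all
    then have "P ({#t#} + ts)" by (rule union)
    then show ?case by simp
  qed (rule empty)
  have "P {#t#}" for t
    by (induction t) (use from_trees graft in auto)
  then show ?thesis using from_trees by blast
qed

lemma cop_counit_right: "pm_sum (cop f) (\<lambda>k. if snd k = {#} then G (fst k) else 0) = G f"
proof (induction f arbitrary: G rule: forest_induct)
  case (union f g)
  have "pm_sum (cop (f + g)) (\<lambda>k. if snd k = {#} then G (fst k) else 0)
      = pm_sum (cop f) (\<lambda>a. if snd a = {#}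
          then pm_sum (cop g) (\<lambda>b. if snd b = {#} then G (fst a + fst b) else 0) else 0)"
    unfolding cop_plus pm_sum_mult by (intro pm_sum_cong) (auto cong: if_cong)
  also have "\<dots> = pm_sum (cop f) (\<lambda>a. if snd a = {#} then G (fst a + g) else 0)"
  proof (intro pm_sum_cong)
    fix a
    show "(if snd a = {#} then pm_sum (cop g) (\<lambda>b. if snd b = {#} then G (fst a + fst b) else 0) else 0)
        = (if snd a = {#} then G (fst a + g) else 0)"
      using union.IH(2)[of "\<lambda>x. G (fst a + x)"] by simp
  qed
  also have "\<dots> = G (f + g)"
    using union.IH(1)[of "\<lambda>x. G (x + g)"] by simp
  finally show ?case .
qed (simp_all add: pm_sum_cop_tree)

lemma cop_counit_left: "pm_sum (cop f) (\<lambda>k. if fst k = {#} then G (snd k) else 0) = G f"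
proof (induction f arbitrary: G rule: forest_induct)
  case (union f g)
  have "pm_sum (cop (f + g)) (\<lambda>k. if fst k = {#} then G (snd k) else 0)
      = pm_sum (cop f) (\<lambda>a. if fst a = {#}
          then pm_sum (cop g) (\<lambda>b. if fst b = {#} then G (snd a + snd b) else 0) else 0)"
    unfolding cop_plus pm_sum_mult by (intro pm_sum_cong) (auto cong: if_cong)
  also have "\<dots> = pm_sum (cop f) (\<lambda>a. if fst a = {#} then G (snd a + g) else 0)"
  proof (intro pm_sum_cong)
    fix a
    show "(if fst a = {#} then pm_sum (cop g) (\<lambda>b. if fst b = {#} then G (snd a + snd b) else 0) else 0)
        = (if fst a = {#} then G (snd a + g) else 0)"
      using union.IH(2)[of "\<lambda>x. G (snd a + x)"] by simp
  qed
  also have "\<dots> = G (f + g)"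
    using union.IH(1)[of "\<lambda>x. G (x + g)"] by simp
  finally show ?case .
next
  case (graft ts)
  then show ?case
    using graft.IH[of "\<lambda>x. G {#Node x#}"] by (simp add: pm_sum_cop_tree cong: if_cong)
qed simp

text \<open>Coassociativity: (\<Delta> \<otimes> id) \<Delta> = (id \<otimes> \<Delta>) \<Delta>, tested against an arbitrary function
  of the three tensor factors.\<close>
lemma cop_coassoc:
  "pm_sum (cop f) (\<lambda>k. pm_sum (cop (fst k)) (\<lambda>j. F (fst j) (snd j) (snd k)))
 = pm_sum (cop f) (\<lambda>k. pm_sum (cop (snd k)) (\<lambda>j. F (fst k) (fst j) (snd j)))"
proof (induction f arbitrary: F rule: forest_induct)
  case (union f g)
  define F1 where "F1 x y z = pm_sum (cop g)
    (\<lambda>b. pm_sum (cop (fst b)) (\<lambda>j. F (x + fst j) (y + snd j) (z + snd b)))" for x y z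
  have "pm_sum (cop (f + g)) (\<lambda>k. pm_sum (cop (fst k)) (\<lambda>j. F (fst j) (snd j) (snd k)))
      = pm_sum (cop f) (\<lambda>a. pm_sum (cop (fst a)) (\<lambda>j. F1 (fst j) (snd j) (snd a)))"
    unfolding F1_def by (simp add: cop_plus pm_sum_mult) (subst pm_sum_swap, simp)
  also have "\<dots> = pm_sum (cop f) (\<lambda>a. pm_sum (cop (snd a)) (\<lambda>j. F1 (fst a) (fst j) (snd j)))"
    by (rule union.IH(1))
  also have "\<dots> = pm_sum (cop f) (\<lambda>a. pm_sum (cop (snd a)) (\<lambda>j. pm_sum (cop g)
      (\<lambda>b. pm_sum (cop (snd b)) (\<lambda>j'. F (fst a + fst b) (fst j + fst j') (snd j + snd j')))))"
  proof (intro pm_sum_cong)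
    fix a j
    show "F1 (fst a) (fst j) (snd j) = pm_sum (cop g) (\<lambda>b. pm_sum (cop (snd b))
        (\<lambda>j'. F (fst a + fst b) (fst j + fst j') (snd j + snd j')))"
      unfolding F1_def using union.IH(2)[of "\<lambda>x y z. F (fst a + x) (fst j + y) (snd j + z)"] .
  qed
  also have "\<dots> = pm_sum (cop (f + g)) (\<lambda>k. pm_sum (cop (snd k)) (\<lambda>j. F (fst k) (fst j) (snd j)))"
    by (subst pm_sum_swap) (simp add: cop_plus pm_sum_mult)
  finally show ?case .
next
  case (graft ts)
  then show ?case
    using graft.IH[of "\<lambda>x y z. F x y {#Node z#}"] by (simp add: pm_sum_cop_tree pm_sum_fadd)
qed simp

section \<open>The convolution monoid of forest functions\<close>

definition conv :: "(forest \<Rightarrow> complex fls) \<Rightarrow> (forest \<Rightarrow> complex fls) \<Rightarrow> forest \<Rightarrow> complex fls" where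
  "conv A B f = pm_sum (cop f) (\<lambda>k. A (fst k) * B (snd k))"

definition counit :: "forest \<Rightarrow> complex fls" where
  "counit f = (if f = {#} then 1 else 0)"

text \<open>The monoid laws of convolution are the coassociativity and counit laws.\<close>

lemma conv_assoc: "conv (conv A B) C = conv A (conv B C)"
proof
  fix f
  have "conv (conv A B) C f
      = pm_sum (cop f) (\<lambda>k. pm_sum (cop (fst k)) (\<lambda>j. A (fst j) * B (snd j) * C (snd k)))"
    unfolding conv_def by (simp add: pm_sum_cmult_right)
  also have "\<dots> = pm_sum (cop f) (\<lambda>k. pm_sum (cop (snd k)) (\<lambda>j. A (fst k) * B (fst j) * C (snd j)))"
    by (rule cop_coassoc)
  also have "\<dots> = conv A (conv B C) f"
    unfolding conv_def by (simp add: pm_sum_cmult_left mult.assoc)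
  finally show "conv (conv A B) C f = conv A (conv B C) f" .
qed

lemma conv_counit_left: "conv counit A = A"
proof
  fix f
  have "conv counit A f = pm_sum (cop f) (\<lambda>k. if fst k = {#} then A (snd k) else 0)"
    unfolding conv_def by (intro pm_sum_cong) (simp add: counit_def)
  then show "conv counit A f = A f" by (simp add: cop_counit_left)
qed

lemma conv_counit_right: "conv A counit = A"
proof
  fix f
  have "conv A counit f = pm_sum (cop f) (\<lambda>k. if snd k = {#} then A (fst k) else 0)"
    unfolding conv_def by (intro pm_sum_cong) (simp add: counit_def)
  then show "conv A counit f = A f" by (simp add: cop_counit_right)
qed

lemma conv_neg_left: "conv (\<lambda>x. - A x) B f = - conv A B f"
  unfolding conv_def by (simp add: pm_sum_fneg)

text \<open>The grading operator Y is a derivation of the convolution product, because the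
  coproduct preserves the number of nodes.\<close>
lemma conv_grading_derivation:
  "of_nat (fsize f) * conv A B f
   = conv (\<lambda>x. of_nat (fsize x) * A x) B f + conv A (\<lambda>x. of_nat (fsize x) * B x) f"
proof -
  have "of_nat (fsize f) * conv A B f
      = pm_sum (cop f) (\<lambda>k. of_nat (fsize f) * (A (fst k) * B (snd k)))"
    unfolding conv_def by (simp add: pm_sum_cmult_left)
  also have "\<dots> = pm_sum (cop f) (\<lambda>k. of_nat (fsize (fst k)) * A (fst k) * B (snd k)
                                     + A (fst k) * (of_nat (fsize (snd k)) * B (snd k)))"
    by (intro pm_sum_cong) (simp add: keys_cop_size[symmetric] algebra_simps)
  finally show ?thesis unfolding conv_def by (simp add: pm_sum_fadd)
qed

lemma conv_left_inverse:
  assumes L0: "L {#} = 1" and G0: "G {#} = 1"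
    and L_rec: "\<And>f. f \<noteq> {#} \<Longrightarrow> L f = - (\<Sum>k\<in>{k\<in>Poly_Mapping.keys (cop f). snd k \<noteq> {#}}.
          fls_const (Poly_Mapping.lookup (cop f) k) * L (fst k) * G (snd k))"
  shows "conv L G = counit"
proof
  fix f
  show "conv L G f = counit f"
  proof (cases "f = {#}")
    case True then show ?thesis by (simp add: conv_def counit_def L0 G0)
  next
    case False
    have "conv L G f = pm_sum (cop f) (\<lambda>k. if snd k = {#} then L (fst k) else 0)
        + pm_sum (cop f) (\<lambda>k. if snd k \<noteq> {#} then L (fst k) * G (snd k) else 0)"
      unfolding conv_def pm_sum_fadd[symmetric] by (intro pm_sum_cong) (auto simp: G0)
    also have "pm_sum (cop f) (\<lambda>k. if snd k = {#} then L (fst k) else 0) = L f"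
      by (rule cop_counit_right)
    also have "pm_sum (cop f) (\<lambda>k. if snd k \<noteq> {#} then L (fst k) * G (snd k) else 0)
        = (\<Sum>k\<in>{k\<in>Poly_Mapping.keys (cop f). snd k \<noteq> {#}}.
            fls_const (Poly_Mapping.lookup (cop f) k) * L (fst k) * G (snd k))"
      unfolding pm_sum_def by (simp add: if_distrib sum.inter_filter mult.assoc cong: if_cong)
    finally show ?thesis using L_rec[OF False] False by (simp add: counit_def)
  qed
qed

function left_inverse :: "(forest \<Rightarrow> complex fls) \<Rightarrow> forest \<Rightarrow> complex fls" where
  "left_inverse G f = (if f = {#} then 1 else
     - (\<Sum>k\<in>{k\<in>Poly_Mapping.keys (cop f). snd k \<noteq> {#}}.
          fls_const (Poly_Mapping.lookup (cop f) k) * left_inverse G (fst k) * G (snd k)))"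
  by pat_completeness auto
termination
proof (relation "measure (\<lambda>(G, f). fsize f)")
  fix G f k
  assume "\<not> f = {#}" "k \<in> {k\<in>Poly_Mapping.keys (cop f). snd k \<noteq> {#}}"
  then show "((G, fst k), (G, f)) \<in> measure (\<lambda>(G, f). fsize f)"
    using keys_cop_size[of k f] fsize_pos[of "snd k"] by auto
qed auto

declare left_inverse.simps [simp del]

text \<open>Hence in the convolution monoid a right inverse of a function with value 1 on the empty
  forest is also a left inverse: it coincides with the left inverse constructed above.\<close>
lemma conv_inverse_commute:
  assumes AB: "conv A B = counit" and A0: "A {#} = 1"
  shows "conv B A = counit"
proof -
  let ?L = "left_inverse A"
  have LA: "conv ?L A = counit"
    by (rule conv_left_inverse) (auto simp: A0 left_inverse.simps[of A])
  have "?L = conv ?L counit" by (simp add: conv_counit_right)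
  also have "\<dots> = conv (conv ?L A) B" by (simp add: AB conv_assoc)
  also have "\<dots> = B" by (simp add: LA conv_counit_left)
  finally show ?thesis using LA by simp
qed

lemma in_zpow_fps_zero [simp]: "in_zpow_fps m 0"
  by (simp add: in_zpow_fps_def)

lemma in_zpow_fps_add: "in_zpow_fps m x \<Longrightarrow> in_zpow_fps m y \<Longrightarrow> in_zpow_fps m (x + y)"
  by (simp add: in_zpow_fps_def)

lemma in_zpow_fps_sum:
  "(\<And>i. i \<in> I \<Longrightarrow> in_zpow_fps m (x i)) \<Longrightarrow> in_zpow_fps m (\<Sum>i\<in>I. x i)"
  by (simp add: in_zpow_fps_def fls_nth_sum)

lemma in_zpow_fps_mono: "m' \<le> m \<Longrightarrow> in_zpow_fps m x \<Longrightarrow> in_zpow_fps m' x"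
  by (simp add: in_zpow_fps_def)

lemma in_zpow_fps_mult:
  assumes "in_zpow_fps m x" "in_zpow_fps n y"
  shows "in_zpow_fps (m + n) (x * y)"
proof (cases "x = 0 \<or> y = 0")
  case False
  then have "m \<le> fls_subdegree x" "n \<le> fls_subdegree y"
    using assms by (auto simp: in_zpow_fps_def intro!: fls_subdegree_geI)
  then show ?thesis
    unfolding in_zpow_fps_def by (auto intro!: fls_times_nth_eq0)
qed auto

lemma in_zpow_fps_const_mult: "in_zpow_fps m x \<Longrightarrow> in_zpow_fps m (fls_const c * x)"
  using in_zpow_fps_mult[of 0 "fls_const c" m x] by (simp add: in_zpow_fps_def)

lemma in_zpow_fps_of_nat_mult: "in_zpow_fps m x \<Longrightarrow> in_zpow_fps m (of_nat c * x)"
  using in_zpow_fps_const_mult[of m x "of_nat c"] by (simp add: fls_of_nat)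

lemma in_zpow_fps_pm_sum:
  "(\<And>k. k \<in> Poly_Mapping.keys X \<Longrightarrow> in_zpow_fps m (F k)) \<Longrightarrow> in_zpow_fps m (pm_sum X F)"
  unfolding pm_sum_def by (intro in_zpow_fps_sum in_zpow_fps_const_mult) auto

definition char_on_forest :: "(HR \<Rightarrow> complex fls) \<Rightarrow> forest \<Rightarrow> complex fls" where
  "char_on_forest \<phi> f = \<phi> (forest_elem f)"

definition char_inverse :: "(HR \<Rightarrow> complex fls) \<Rightarrow> forest \<Rightarrow> complex fls" where
  "char_inverse \<phi> f = \<phi> (antipode f)"

definition beta :: "(HR \<Rightarrow> complex fls) \<Rightarrow> nat \<Rightarrow> forest \<Rightarrow> complex fls" where
  "beta \<phi> n = conv (char_inverse \<phi>) (\<lambda>x. of_nat (fsize x) ^ n * char_on_forest \<phi> x)"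

lemma character_zero:
  assumes "character \<phi>" shows "\<phi> 0 = 0"
proof -
  have "\<phi> (0 + 0) = \<phi> 0 + \<phi> 0" using assms unfolding character_def by blast
  then show ?thesis by simp
qed

lemma character_uminus:
  assumes "character \<phi>" shows "\<phi> (- x) = - \<phi> x"
proof -
  have "\<phi> (x + - x) = \<phi> x + \<phi> (- x)" using assms unfolding character_def by blast
  then show ?thesis using character_zero[OF assms] by (simp add: eq_neg_iff_add_eq_0 add.commute)
qed

lemma character_sum: "character \<phi> \<Longrightarrow> \<phi> (\<Sum>i\<in>I. x i) = (\<Sum>i\<in>I. \<phi> (x i))"
  by (induction I rule: infinite_finite_induct) (auto simp: character_zero character_def)

lemma character_one:
  assumes "character \<phi>" shows "\<phi> 1 = 1"
proof -
  have "\<phi> (Poly_Mapping.single {#} 1) = fls_const 1" using assms unfolding character_def by blast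
  then show ?thesis by simp
qed

lemma char_inverse_empty: "character \<phi> \<Longrightarrow> char_inverse \<phi> {#} = 1"
  unfolding char_inverse_def antipode.simps[of "{#}"] by (simp add: character_one)

text \<open>Applying \<phi> to the recursive definition of the antipode shows that \<phi> \<circ> S is a left
  convolution inverse of \<phi>; it is therefore also a right inverse.\<close>
lemma char_inverse_conv:
  assumes "character \<phi>"
  shows "conv (char_inverse \<phi>) (char_on_forest \<phi>) = counit"
    and "conv (char_on_forest \<phi>) (char_inverse \<phi>) = counit"
proof -
  show left: "conv (char_inverse \<phi>) (char_on_forest \<phi>) = counit"
  proof (rule conv_left_inverse)
    fix f :: forest assume "f \<noteq> {#}"
    then show "char_inverse \<phi> f = - (\<Sum>k\<in>{k\<in>Poly_Mapping.keys (cop f). snd k \<noteq> {#}}.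
        fls_const (Poly_Mapping.lookup (cop f) k) * char_inverse \<phi> (fst k) * char_on_forest \<phi> (snd k))"
      using assms unfolding char_inverse_def char_on_forest_def forest_elem_def
      by (subst antipode.simps) (simp add: character_uminus character_sum character_def)
  qed (simp_all add: char_inverse_empty[OF assms] char_on_forest_def forest_elem_def
         character_one[OF assms])
  show "conv (char_on_forest \<phi>) (char_inverse \<phi>) = counit"
    by (rule conv_inverse_commute[OF left char_inverse_empty[OF assms]])
qed

section \<open>The maps beta and the bound on their pole order\<close>

lemma beta_zero: "character \<phi> \<Longrightarrow> beta \<phi> 0 = counit"
  by (simp add: beta_def char_inverse_conv(1))

text \<open>Writing Psi = \<phi> \<circ> S and
  Phi_m = Y^m \<phi>, the derivation property gives Y (beta m) = (Y Psi) \<star> Phi_m + beta (m + 1);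
  for m = 0 this shows (Y Psi) \<star> Phi = - beta 1, and Phi_m = Phi \<star> beta m turns the first
  term into - beta 1 \<star> beta m.\<close>
lemma beta_Suc:
  assumes "character \<phi>"
  shows "beta \<phi> (Suc n) f = of_nat (fsize f) * beta \<phi> n f + conv (beta \<phi> 1) (beta \<phi> n) f"
proof -
  define Psi where "Psi = char_inverse \<phi>"
  define YPsi where "YPsi = (\<lambda>x. of_nat (fsize x) * Psi x)"
  define Phi where "Phi m = (\<lambda>x. of_nat (fsize x) ^ m * char_on_forest \<phi> x)" for m
  have beta_eq: "beta \<phi> m = conv Psi (Phi m)" for m
    by (simp add: beta_def Psi_def Phi_def)
  have derivation: "of_nat (fsize g) * beta \<phi> m g = conv YPsi (Phi m) g + beta \<phi> (Suc m) g" for m g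
    using conv_grading_derivation[of g Psi "Phi m"]
    by (simp add: beta_eq YPsi_def Phi_def mult.assoc)
  have Phi_beta: "conv (Phi 0) (beta \<phi> m) = Phi m" for m
    using char_inverse_conv(2)[OF assms]
    by (simp add: beta_eq Phi_def Psi_def conv_assoc[symmetric] conv_counit_left)
  have YPsi_Phi: "conv YPsi (Phi 0) g = - beta \<phi> 1 g" for g
    using derivation[of g 0]
    by (simp add: beta_zero[OF assms] counit_def eq_neg_iff_add_eq_0 split: if_splits)
  have "conv YPsi (Phi n) = conv YPsi (conv (Phi 0) (beta \<phi> n))"
    by (simp only: Phi_beta)
  also have "\<dots> = conv (conv YPsi (Phi 0)) (beta \<phi> n)"
    by (simp only: conv_assoc)
  also have "conv YPsi (Phi 0) = (\<lambda>g. - beta \<phi> 1 g)"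
    using YPsi_Phi by auto
  finally have "conv YPsi (Phi n) f = - conv (beta \<phi> 1) (beta \<phi> n) f"
    by (simp add: conv_neg_left)
  then show ?thesis using derivation[of f n] by (simp add: algebra_simps)
qed

lemma beta_pole_order:
  assumes "character \<phi>" and simple_pole: "\<And>f. in_zpow_fps (-1) (beta \<phi> 1 f)"
  shows "in_zpow_fps (- int n) (beta \<phi> n f)"
proof (induction n arbitrary: f)
  case 0
  then show ?case by (simp add: beta_zero[OF assms(1)] counit_def in_zpow_fps_def)
next
  case (Suc n)
  have "in_zpow_fps (- int (Suc n)) (of_nat (fsize f) * beta \<phi> n f)"
    by (rule in_zpow_fps_of_nat_mult, rule in_zpow_fps_mono[OF _ Suc.IH]) simp
  moreover have "in_zpow_fps (- int (Suc n)) (conv (beta \<phi> 1) (beta \<phi> n) f)"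
    unfolding conv_def using in_zpow_fps_mult[OF simple_pole Suc.IH]
    by (intro in_zpow_fps_pm_sum) simp
  ultimately show ?case
    unfolding beta_Suc[OF assms(1)] by (rule in_zpow_fps_add)
qed

lemma sweedler_sum_coproduct:
  "sweedler_sum (coproduct w) F = (\<Sum>f\<in>Poly_Mapping.keys w.
     fls_const (Poly_Mapping.lookup w f) * pm_sum (cop f) (\<lambda>k. F (fst k) (snd k)))"
  unfolding sweedler_sum_pm_sum coproduct_def pm_sum_sum by (simp add: pm_sum_mult)

lemma in_zpow_fps_sweedler_iff:
  "(\<forall>w. in_zpow_fps m (sweedler_sum (coproduct w) F))
   \<longleftrightarrow> (\<forall>f. in_zpow_fps m (pm_sum (cop f) (\<lambda>k. F (fst k) (snd k))))"
proof (intro iffI allI)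
  fix f
  assume "\<forall>w. in_zpow_fps m (sweedler_sum (coproduct w) F)"
  then have "in_zpow_fps m (sweedler_sum (coproduct (forest_elem f)) F)" ..
  then show "in_zpow_fps m (pm_sum (cop f) (\<lambda>k. F (fst k) (snd k)))"
    by (simp add: sweedler_sum_coproduct forest_elem_def)
next
  fix w
  assume "\<forall>f. in_zpow_fps m (pm_sum (cop f) (\<lambda>k. F (fst k) (snd k)))"
  then show "in_zpow_fps m (sweedler_sum (coproduct w) F)"
    by (simp add: sweedler_sum_coproduct in_zpow_fps_sum in_zpow_fps_const_mult)
qed

lemma pm_sum_cop_beta:
  "pm_sum (cop f) (\<lambda>k. \<phi> (antipode (fst k)) * of_nat (fsize (snd k)) ^ n * \<phi> (forest_elem (snd k)))
   = beta \<phi> n f"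
  by (simp add: beta_def conv_def char_inverse_def char_on_forest_def mult.assoc)

lemma simple_pole_iff_pole_orders:
  assumes "character \<phi>"
  shows "(\<forall>w. in_zpow_fps (-1) (sweedler_sum (coproduct w)
            (\<lambda>w1 w2. \<phi> (antipode w1) * of_nat (fsize w2) * \<phi> (forest_elem w2))))
     \<longleftrightarrow> (\<forall>n w. in_zpow_fps (- int n) (sweedler_sum (coproduct w)
            (\<lambda>w1 w2. \<phi> (antipode w1) * of_nat (fsize w2) ^ n * \<phi> (forest_elem w2))))"
proof -
  have on_forests: "(\<forall>w. in_zpow_fps m (sweedler_sum (coproduct w)
            (\<lambda>w1 w2. \<phi> (antipode w1) * of_nat (fsize w2) ^ n * \<phi> (forest_elem w2))))
     \<longleftrightarrow> (\<forall>f. in_zpow_fps m (beta \<phi> n f))" for m n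
    by (simp only: in_zpow_fps_sweedler_iff pm_sum_cop_beta)
  have "(\<forall>f. in_zpow_fps (-1) (beta \<phi> 1 f)) \<longleftrightarrow> (\<forall>n f. in_zpow_fps (- int n) (beta \<phi> n f))"
  proof (intro iffI allI)
    fix n f
    assume "\<forall>f. in_zpow_fps (-1) (beta \<phi> 1 f)"
    then show "in_zpow_fps (- int n) (beta \<phi> n f)"
      by (intro beta_pole_order[OF assms]) blast
  next
    fix f
    assume "\<forall>n f. in_zpow_fps (- int n) (beta \<phi> n f)"
    then show "in_zpow_fps (-1) (beta \<phi> 1 f)"
      by (metis of_nat_1)
  qed
  moreover have "(\<lambda>w1 w2. \<phi> (antipode w1) * of_nat (fsize w2) * \<phi> (forest_elem w2))
      = (\<lambda>w1 w2. \<phi> (antipode w1) * of_nat (fsize w2) ^ 1 * \<phi> (forest_elem w2))"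
    by simp
  ultimately show ?thesis
    by (simp only: on_forests)
qed

section \<open>Coefficient extraction: moments versus exponential generating function\<close>

unbundle fps_syntax

lemma fps_times_fls_nth:
  fixes F :: "complex fps" and g :: "complex fls"
  assumes g: "in_zpow_fps d g"
  shows "(fps_to_fls F * g) $$ j = (\<Sum>i\<le>nat (j - d). fps_nth F i * g $$ (j - int i))"
proof (cases "g = 0")
  case False
  define f where "f = fps_to_fls F"
  have dg: "d \<le> fls_subdegree g"
    using g False by (auto simp: in_zpow_fps_def intro!: fls_subdegree_geI)
  have df: "0 \<le> fls_subdegree f"
    unfolding f_def by (rule fls_subdegree_fls_to_fps_gt0)
  have "(f * g) $$ j = (\<Sum>i=fls_subdegree f..j - fls_subdegree g. f $$ i * g $$ (j - i))"
    by (rule fls_times_nth(2))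
  also have "\<dots> = (\<Sum>i=0..j - d. f $$ i * g $$ (j - i))"
  proof (rule sum.mono_neutral_left)
    show "\<forall>i\<in>{0..j - d} - {fls_subdegree f..j - fls_subdegree g}. f $$ i * g $$ (j - i) = 0"
      by (auto simp: not_le)
  qed (use dg df in auto)
  also have "\<dots> = (\<Sum>i\<le>nat (j - d). f $$ int i * g $$ (j - int i))"
  proof (cases "j - d < 0")
    case True
    then have "g $$ j = 0" using g by (simp add: in_zpow_fps_def)
    with True show ?thesis by simp
  next
    case False
    then have "{0..j - d} = int ` {..nat (j - d)}"
      by (auto simp: image_iff intro!: bexI[of _ "nat _"])
    then show ?thesis by (simp add: sum.reindex)
  qed
  finally show ?thesis by (simp add: f_def)
qed simp

lemma of_nat_power_times_fls_nth:
  "((of_nat c :: complex fls) ^ i * p) $$ l = of_nat c ^ i * p $$ l"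
proof -
  have "(of_nat c :: complex fls) ^ i = fls_const (of_nat (c ^ i))"
    by (induction i) (simp_all add: fls_of_nat)
  then show ?thesis by simp
qed

lemma exp_sum_nth:
  fixes P :: "'k \<Rightarrow> complex fls" and m :: "'k \<Rightarrow> nat"
  assumes P: "\<And>k. k \<in> K \<Longrightarrow> in_zpow_fps (- int N) (P k)"
  shows "(\<Sum>k\<in>K. fps_to_fls (fps_exp (s * of_nat (m k))) * P k) $$ j
       = (\<Sum>i\<le>nat (j + int N). s ^ i / of_nat (fact i) * (\<Sum>k\<in>K. of_nat (m k) ^ i * P k) $$ (j - int i))"
proof -
  have "(\<Sum>k\<in>K. fps_to_fls (fps_exp (s * of_nat (m k))) * P k) $$ j
      = (\<Sum>k\<in>K. \<Sum>i\<le>nat (j + int N). (s * of_nat (m k)) ^ i / of_nat (fact i) * P k $$ (j - int i))"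
    unfolding fls_nth_sum by (intro sum.cong refl) (simp add: fps_times_fls_nth[OF P])
  also have "\<dots> = (\<Sum>i\<le>nat (j + int N). \<Sum>k\<in>K. (s * of_nat (m k)) ^ i / of_nat (fact i) * P k $$ (j - int i))"
    by (rule sum.swap)
  also have "\<dots> = (\<Sum>i\<le>nat (j + int N). s ^ i / of_nat (fact i) * (\<Sum>k\<in>K. of_nat (m k) ^ i * P k) $$ (j - int i))"
    unfolding fls_nth_sum of_nat_power_times_fls_nth sum_distrib_left
    by (intro sum.cong refl) (simp add: power_mult_distrib field_simps)
  finally show ?thesis .
qed

lemma common_pole_bound:
  assumes "finite K"
  obtains N where "\<And>k. k \<in> K \<Longrightarrow> in_zpow_fps (- int N) (P k)"
proof -
  define N where "N = (\<Sum>k\<in>K. nat (- fls_subdegree (P k)))"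
  have "in_zpow_fps (- int N) (P k)" if "k \<in> K" for k
  proof -
    have "nat (- fls_subdegree (P k)) \<le> N"
      unfolding N_def using assms that by (intro member_le_sum) auto
    then show ?thesis by (auto simp: in_zpow_fps_def)
  qed
  then show ?thesis using that by blast
qed

text \<open>Backward direction at the level of coefficients: if the exponential sum is a power
  series for every s, then for j < -n the coefficient of z^(j + n) of the exponential sum
  is a polynomial in s vanishing identically, and the coefficient of z^j in the n-th moment
  is its n-th coefficient times n!.\<close>
lemma moment_nth_vanishes:
  fixes P :: "'k \<Rightarrow> complex fls" and m :: "'k \<Rightarrow> nat"
  assumes P: "\<And>k. k \<in> K \<Longrightarrow> in_zpow_fps (- int N) (P k)"
    and E: "\<forall>s. in_zpow_fps 0 (\<Sum>k\<in>K. fps_to_fls (fps_exp (s * of_nat (m k))) * P k)"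
    and j: "- int N \<le> j" "j < - int n"
  shows "(\<Sum>k\<in>K. of_nat (m k) ^ n * P k) $$ j = 0"
proof -
  define B where "B i = (\<Sum>k\<in>K. of_nat (m k) ^ i * P k)" for i
  define M where "M = nat (j + int n + int N)"
  have "(\<Sum>i\<le>M. (B i $$ (j + int n - int i) / of_nat (fact i)) * s ^ i) = 0" for s
  proof -
    have "(\<Sum>i\<le>M. (B i $$ (j + int n - int i) / of_nat (fact i)) * s ^ i)
        = (\<Sum>i\<le>M. s ^ i / of_nat (fact i) * B i $$ (j + int n - int i))"
      by (intro sum.cong refl) (simp add: mult.commute)
    also have "\<dots> = (\<Sum>k\<in>K. fps_to_fls (fps_exp (s * of_nat (m k))) * P k) $$ (j + int n)"
      unfolding M_def B_def by (rule exp_sum_nth[OF P, symmetric])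
    also have "\<dots> = 0"
      using E j by (simp add: in_zpow_fps_def)
    finally show ?thesis .
  qed
  then have "\<forall>i\<le>M. B i $$ (j + int n - int i) / of_nat (fact i) = 0"
    by (intro polyfun_eq_0[THEN iffD1] allI)
  moreover have "n \<le> M" using j unfolding M_def by simp
  ultimately have "B n $$ (j + int n - int n) / of_nat (fact n) = 0" by blast
  then show ?thesis by (simp add: B_def)
qed

text \<open>Forwards, every term of the coefficient polynomial of a
  negative power of z vanishes; backwards, use the previous lemma below a common pole
  bound N and that bound itself beyond it.\<close>
lemma moments_iff_exp_sum:
  fixes P :: "'k \<Rightarrow> complex fls" and m :: "'k \<Rightarrow> nat"
  assumes "finite K"
  shows "(\<forall>n. in_zpow_fps (- int n) (\<Sum>k\<in>K. of_nat (m k) ^ n * P k))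
     \<longleftrightarrow> (\<forall>s. in_zpow_fps 0 (\<Sum>k\<in>K. fps_to_fls (fps_exp (s * of_nat (m k))) * P k))"
    (is "(\<forall>n. in_zpow_fps _ (?B n)) \<longleftrightarrow> (\<forall>s. in_zpow_fps 0 (?E s))")
proof -
  obtain N where P: "\<And>k. k \<in> K \<Longrightarrow> in_zpow_fps (- int N) (P k)"
    using common_pole_bound[OF assms] by blast
  show ?thesis
  proof (intro iffI allI)
    fix s
    assume "\<forall>n. in_zpow_fps (- int n) (?B n)"
    then have "?B i $$ (j - int i) = 0" if "j < 0" for i j
      using that by (simp add: in_zpow_fps_def)
    then show "in_zpow_fps 0 (?E s)"
      by (simp add: in_zpow_fps_def exp_sum_nth[OF P])
  next
    fix n
    assume E: "\<forall>s. in_zpow_fps 0 (?E s)"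
    have "in_zpow_fps (- int N) (?B n)"
      unfolding of_nat_power[symmetric] by (intro in_zpow_fps_sum in_zpow_fps_of_nat_mult P)
    then show "in_zpow_fps (- int n) (?B n)"
      using moment_nth_vanishes[OF P E] unfolding in_zpow_fps_def by (meson not_le)
  qed
qed

lemma sweedler_moments_iff_exp:
  "(\<forall>n. in_zpow_fps (- int n) (sweedler_sum X (\<lambda>a b. A a * of_nat (g b) ^ n * B b)))
   \<longleftrightarrow> (\<forall>s. in_zpow_fps 0 (sweedler_sum X
          (\<lambda>a b. A a * fps_to_fls (fps_exp (s * of_nat (g b))) * B b)))"
proof -
  define P where "P k = fls_const (Poly_Mapping.lookup X k) * A (fst k) * B (snd k)" for k
  have "sweedler_sum X (\<lambda>a b. A a * of_nat (g b) ^ n * B b)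
      = (\<Sum>k\<in>Poly_Mapping.keys X. of_nat (g (snd k)) ^ n * P k)" for n
    unfolding sweedler_sum_def P_def by (intro sum.cong refl) (simp add: mult_ac)
  moreover have "sweedler_sum X (\<lambda>a b. A a * fps_to_fls (fps_exp (s * of_nat (g b))) * B b)
      = (\<Sum>k\<in>Poly_Mapping.keys X. fps_to_fls (fps_exp (s * of_nat (g (snd k)))) * P k)" for s
    unfolding sweedler_sum_def P_def by (intro sum.cong refl) (simp add: mult_ac)
  ultimately show ?thesis
    by (simp only: moments_iff_exp_sum[OF finite_keys])
qed

theorem mainTheorem16:
  fixes \<phi> :: "HR \<Rightarrow> complex fls"
  assumes "character \<phi>"
  shows
    "((\<forall>w::HR. in_zpow_fps (-1) (sweedler_sum (coproduct w)
          (\<lambda>w1 w2. \<phi> (antipode w1) * of_nat (fsize w2) * \<phi> (forest_elem w2))))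
      \<longleftrightarrow>
      (\<forall>(n::nat) (w::HR). in_zpow_fps (- int n) (sweedler_sum (coproduct w)
          (\<lambda>w1 w2. \<phi> (antipode w1) * of_nat (fsize w2) ^ n * \<phi> (forest_elem w2)))))
     \<and>
     ((\<forall>w::HR. in_zpow_fps (-1) (sweedler_sum (coproduct w)
          (\<lambda>w1 w2. \<phi> (antipode w1) * of_nat (fsize w2) * \<phi> (forest_elem w2))))
      \<longleftrightarrow>
      (\<forall>(s::complex) (w::HR). in_zpow_fps 0 (sweedler_sum (coproduct w)
          (\<lambda>w1 w2. \<phi> (antipode w1) * fps_to_fls (fps_exp (s * of_nat (fsize w2)))
                    * \<phi> (forest_elem w2)))))"
proof -
  have moments_iff_exp: "(\<forall>n. in_zpow_fps (- int n) (sweedler_sum (coproduct w)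
          (\<lambda>w1 w2. \<phi> (antipode w1) * of_nat (fsize w2) ^ n * \<phi> (forest_elem w2))))
      \<longleftrightarrow> (\<forall>s. in_zpow_fps 0 (sweedler_sum (coproduct w)
          (\<lambda>w1 w2. \<phi> (antipode w1) * fps_to_fls (fps_exp (s * of_nat (fsize w2)))
                    * \<phi> (forest_elem w2))))" for w
    by (rule sweedler_moments_iff_exp)
  show ?thesis
    using simple_pole_iff_pole_orders[OF assms] moments_iff_exp by blast
qed

end
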